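(* Let $k_1<k_2$ and let $p_1,\ldots,p_\ell$ be the primes in $S(k_1,k_2):=\{p\in\mathcal{P}:k_1<p\le k_2\}$. Let $n,m\in\mathbb{N}$ satisfy $m\prod_{j=1}^{\ell}p_j\le n<(m+1)\prod_{j=1}^{\ell}p_j$. Let $X_1,\ldots,X_n$ be i.i.d. uniform on $\{1,\ldots,n\}$, and let $\tilde X_1,\ldots,\tilde X_n$ be i.i.d. with $\tilde X_i=p_1^{c_1}\cdots p_\ell^{c_\ell}$ where $c_1,\ldots,c_\ell$ are independent Bernoulli variables with parameters $1/p_1,\ldots,1/p_\ell$. For a prime $q$ let $Y_q:=\#\{i:q\mid X_i\}$ and $\tilde Y_q:=\#\{i:q\mid\tilde X_i\}$. Then there exists a coupling $\mu$ of $(X_i)_{i\le n}$ and $(\tilde X_i)_{i\le n}$ (a probability measure with these two marginal laws) such that for every $\epsilon>0$, \[ \mu\left(\sum_{q\in S(k_{1},k_{2})}Y_{q}^{2}-\sum_{q\in S(k_{1},k_{2})}\tilde{Y}_{q}^{2}\geq n^{2}\epsilon\right)\leq2^{n}\left(\frac{1}{m}\right)^{\frac{n\epsilon}{2k_{2}}}. \]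
   Context: $\mathcal{P}$ denotes the set of primes. *)

theory Defs
  imports "HOL-Probability.Probability"
begin

definition primes_between :: "nat \<Rightarrow> nat \<Rightarrow> nat set" where
  "primes_between k1 k2 = {p. prime p \<and> k1 < p \<and> p \<le> k2}"

definition unif_law :: "nat \<Rightarrow> nat pmf" where
  "unif_law n = pmf_of_set {1..n}"

definition tilde_law :: "nat set \<Rightarrow> nat pmf" where
  "tilde_law S = map_pmf (\<lambda>c. \<Prod>p\<in>S. p ^ (if c p then 1 else 0))
                   (Pi_pmf S False (\<lambda>p. bernoulli_pmf (1 / real p)))"

definition iid_law :: "nat \<Rightarrow> nat pmf \<Rightarrow> (nat \<Rightarrow> nat) pmf" where
  "iid_law n D = Pi_pmf {0..<n} 0 (\<lambda>_. D)"

definition Ycount :: "nat \<Rightarrow> (nat \<Rightarrow> nat) \<Rightarrow> nat \<Rightarrow> nat" where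
  "Ycount n x q = card {i \<in> {0..<n}. q dvd x i}"

end

theory Submission
  imports Defs
begin

text \<open>
  Put \<open>P = \<Prod>S\<close> and \<open>M = m P \<le> n\<close>. On a block of \<open>M\<close> consecutive integers the divisibility
  indicators of the distinct primes of \<open>S\<close> are independent, with \<open>q\<close> dividing a uniform
  element with probability \<open>1/q\<close>; so if \<open>X\<close> is uniform on \<open>{1..M}\<close>, the product of the primes of
  \<open>S\<close> dividing \<open>X\<close> has exactly the law of \<open>X\<^sub>\<sim>\<close>. Couple each coordinate accordingly: draw
  \<open>X\<close> uniform on \<open>{1..n}\<close> and take \<open>X\<^sub>\<sim>\<close> to be this product if \<open>X \<le> M\<close>, an independent sample
  otherwise. The event \<open>X > M\<close> has probability \<open>(n - M)/n < P/n \<le> 1/m\<close>. A coordinate on which the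
  two sides are divisible by the same primes of \<open>S\<close> does not affect \<open>Y\<^sub>q - Y\<^sub>\<sim>\<^sub>q\<close>, and every other
  coordinate changes \<open>Y\<^sub>q\<^sup>2 - Y\<^sub>\<sim>\<^sub>q\<^sup>2\<close> by at most \<open>2n\<close>; hence the event in question forces at least
  \<open>n\<epsilon>/(2k\<^sub>2)\<close> coordinates with \<open>X > M\<close>, and a union bound over the \<open>2\<^sup>n\<close> possible sets of such
  coordinates gives the estimate.
\<close>

definition divisor_pattern :: "nat set \<Rightarrow> nat \<Rightarrow> nat set" where
  "divisor_pattern S x = {q\<in>S. q dvd x}"

lemma divisor_pattern_prime_mult:
  assumes "\<forall>q\<in>S. prime q" "prime p" "p \<notin> S"
  shows "divisor_pattern S (p * y) = divisor_pattern S y"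
proof -
  have "q dvd p * y \<longleftrightarrow> q dvd y" if "q \<in> S" for q
  proof -
    have q: "prime q" "q \<noteq> p" using assms that by auto
    then have "\<not> q dvd p" using assms(2) primes_dvd_imp_eq by blast
    then show ?thesis using q prime_dvd_mult_iff by blast
  qed
  then show ?thesis unfolding divisor_pattern_def by auto
qed

lemma card_multiples_with_divisor_pattern:
  assumes "\<forall>q\<in>S. prime q" "prime p" "p \<notin> S"
  shows "card {x\<in>{1..m * (p * P)}. p dvd x \<and> divisor_pattern S x = T}
       = card {y\<in>{1..m * P}. divisor_pattern S y = T}"
proof -
  have p: "p \<ge> 1" "p > 0" using assms(2) prime_ge_1_nat prime_gt_0_nat by blast+
  have image: "(\<lambda>y. p * y) ` {y\<in>{1..m * P}. divisor_pattern S y = T}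
      = {x\<in>{1..m * (p * P)}. p dvd x \<and> divisor_pattern S x = T}"
  proof (intro equalityI subsetI)
    fix x assume "x \<in> (\<lambda>y. p * y) ` {y\<in>{1..m * P}. divisor_pattern S y = T}"
    then obtain y where y: "x = p * y" "y \<in> {1..m * P}" "divisor_pattern S y = T" by auto
    have "p * y \<le> m * (p * P)" "1 \<le> p * y" using y(2) p by auto
    then show "x \<in> {x\<in>{1..m * (p * P)}. p dvd x \<and> divisor_pattern S x = T}"
      using y divisor_pattern_prime_mult[OF assms] by auto
  next
    fix x assume x: "x \<in> {x\<in>{1..m * (p * P)}. p dvd x \<and> divisor_pattern S x = T}"
    then obtain y where y: "x = p * y" by auto
    have "y \<ge> 1" using x y by (cases y) auto
    moreover have "y \<le> m * P" using x y p by (auto simp: ac_simps)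
    ultimately show "x \<in> (\<lambda>y. p * y) ` {y\<in>{1..m * P}. divisor_pattern S y = T}"
      using x y divisor_pattern_prime_mult[OF assms] by auto
  qed
  have "inj_on (\<lambda>y. p * y) {y\<in>{1..m * P}. divisor_pattern S y = T}"
    using p by (auto simp: inj_on_def)
  from card_image[OF this] show ?thesis unfolding image .
qed

lemma card_divisor_pattern:
  assumes "finite S" "\<forall>p\<in>S. prime p" "T \<subseteq> S"
  shows "card {x\<in>{1..m * \<Prod>S}. divisor_pattern S x = T} = m * (\<Prod>q\<in>S - T. q - 1)"
  using assms
proof (induction S arbitrary: T m rule: finite_induct)
  case empty
  then have "{x\<in>{1..m * \<Prod>{}}. divisor_pattern {} x = T} = {1..m}"
    by (auto simp: divisor_pattern_def)
  then show ?case by simp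
next
  case (insert p S)
  have primes: "\<forall>q\<in>S. prime q" "prime p" using insert.prems by auto
  define P where "P = \<Prod>S"
  have prod: "\<Prod>(insert p S) = p * P" using insert.hyps by (simp add: P_def)
  have pattern: "divisor_pattern (insert p S) x
      = (if p dvd x then insert p (divisor_pattern S x) else divisor_pattern S x)" for x
    by (auto simp: divisor_pattern_def)
  note multiples = card_multiples_with_divisor_pattern[OF primes insert.hyps(2), of m P]
  show ?case
  proof (cases "p \<in> T")
    case True
    define T' where "T' = T - {p}"
    have T': "T' \<subseteq> S" "T = insert p T'" "p \<notin> T'"
      using insert.hyps insert.prems True by (auto simp: T'_def)
    have "{x\<in>{1..m * \<Prod>(insert p S)}. divisor_pattern (insert p S) x = T}
        = {x\<in>{1..m * (p * P)}. p dvd x \<and> divisor_pattern S x = T'}"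
      unfolding prod pattern using T' insert.hyps(2) by (auto simp: divisor_pattern_def)
    then have "card {x\<in>{1..m * \<Prod>(insert p S)}. divisor_pattern (insert p S) x = T}
        = m * (\<Prod>q\<in>S - T'. q - 1)"
      using multiples insert.IH[OF primes(1) T'(1)] by (simp add: P_def)
    moreover have "insert p S - T = S - T'" using T' insert.hyps by auto
    ultimately show ?thesis by simp
  next
    case False
    have T: "T \<subseteq> S" using insert.prems False by auto
    have "{x\<in>{1..m * \<Prod>(insert p S)}. divisor_pattern (insert p S) x = T}
        = {x\<in>{1..(m * p) * P}. divisor_pattern S x = T}
          - {x\<in>{1..m * (p * P)}. p dvd x \<and> divisor_pattern S x = T}"
      unfolding prod pattern using False T by (auto simp: ac_simps divisor_pattern_def)
    moreover have "{x\<in>{1..m * (p * P)}. p dvd x \<and> divisor_pattern S x = T}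
        \<subseteq> {x\<in>{1..(m * p) * P}. divisor_pattern S x = T}"
      by (auto simp: ac_simps)
    ultimately have "card {x\<in>{1..m * \<Prod>(insert p S)}. divisor_pattern (insert p S) x = T}
        = (m * p) * (\<Prod>q\<in>S - T. q - 1) - m * (\<Prod>q\<in>S - T. q - 1)"
      using card_Diff_subset[of "{x\<in>{1..m * (p * P)}. p dvd x \<and> divisor_pattern S x = T}"]
        multiples insert.IH[OF primes(1) T] by (simp add: P_def)
    also have "\<dots> = m * ((p - 1) * (\<Prod>q\<in>S - T. q - 1))"
      by (simp add: algebra_simps diff_mult_distrib2)
    also have "(p - 1) * (\<Prod>q\<in>S - T. q - 1) = (\<Prod>q\<in>insert p S - T. q - 1)"
    proof -
      have "insert p S - T = insert p (S - T)" using False by auto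
      then show ?thesis using insert.hyps by simp
    qed
    finally show ?thesis .
  qed
qed

lemma prod_bernoulli_pmf_primes:
  assumes "finite S" "\<forall>p\<in>S. prime p"
  shows "(\<Prod>p\<in>S. pmf (bernoulli_pmf (1 / real p)) (p \<in> T))
       = real (\<Prod>q\<in>S - T. q - 1) / real (\<Prod>S)"
proof -
  have ge1: "real q \<ge> 1" if "q \<in> S" for q using assms that prime_ge_1_nat by auto
  have "pmf (bernoulli_pmf (1 / real p)) (p \<in> T) = (if p \<in> T then 1 else real p - 1) / real p"
    if "p \<in> S" for p
    using ge1[OF that] by (cases "p \<in> T") (auto simp: field_simps)
  then have "(\<Prod>p\<in>S. pmf (bernoulli_pmf (1 / real p)) (p \<in> T))
      = (\<Prod>p\<in>S. (if p \<in> T then 1 else real p - 1) / real p)"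
    by (intro prod.cong refl)
  also have "\<dots> = (\<Prod>p\<in>S. if p \<in> T then 1 else real p - 1) / real (\<Prod>S)"
    by (simp add: of_nat_prod prod_dividef)
  also have "(\<Prod>p\<in>S. if p \<in> T then 1 else real p - 1) = (\<Prod>q\<in>S - T. real q - 1)"
    using assms(1) by (simp add: prod.If_cases Diff_eq)
  also have "\<dots> = real (\<Prod>q\<in>S - T. q - 1)"
    using ge1 by (auto simp: of_nat_prod of_nat_diff intro!: prod.cong)
  finally show ?thesis .
qed

lemma map_dvd_indicators_pmf_of_set:
  assumes "finite S" "\<forall>p\<in>S. prime p" "m \<ge> 1"
  shows "map_pmf (\<lambda>x p. p \<in> S \<and> p dvd x) (pmf_of_set {1..m * \<Prod>S})
       = Pi_pmf S False (\<lambda>p. bernoulli_pmf (1 / real p))"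
proof (rule pmf_eqI)
  fix c :: "nat \<Rightarrow> bool"
  define g where "g = (\<lambda>x p. p \<in> S \<and> p dvd x)"
  have "\<Prod>S > 0" using assms prime_gt_0_nat by (auto simp: prod_pos)
  then have M: "m * \<Prod>S > 0" using assms(3) by simp
  then have lhs: "pmf (map_pmf g (pmf_of_set {1..m * \<Prod>S})) c
      = real (card ({1..m * \<Prod>S} \<inter> g -` {c})) / real (m * \<Prod>S)"
    by (simp add: pmf_map measure_pmf_of_set)
  show "pmf (map_pmf g (pmf_of_set {1..m * \<Prod>S})) c
      = pmf (Pi_pmf S False (\<lambda>p. bernoulli_pmf (1 / real p))) c"
  proof (cases "\<forall>p. p \<notin> S \<longrightarrow> \<not> c p")
    case True
    define T where "T = {p\<in>S. c p}"
    have c: "c p = (p \<in> T)" for p using True by (auto simp: T_def)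
    have "{1..m * \<Prod>S} \<inter> g -` {c} = {x\<in>{1..m * \<Prod>S}. divisor_pattern S x = T}"
      using True by (auto simp: g_def divisor_pattern_def T_def fun_eq_iff)
    then have "pmf (map_pmf g (pmf_of_set {1..m * \<Prod>S})) c
        = real (\<Prod>q\<in>S - T. q - 1) / real (\<Prod>S)"
      using lhs card_divisor_pattern[OF assms(1,2), of T m] assms(3) by (simp add: T_def)
    then show ?thesis
      using True assms(1) prod_bernoulli_pmf_primes[OF assms(1,2), of T] by (simp add: pmf_Pi c g_def)
  next
    case False
    then have "{1..m * \<Prod>S} \<inter> g -` {c} = {}" by (auto simp: g_def fun_eq_iff)
    moreover have "pmf (Pi_pmf S False (\<lambda>p. bernoulli_pmf (1 / real p))) c = 0"
      using False assms(1) by (subst pmf_Pi) auto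
    ultimately show ?thesis using lhs by simp
  qed
qed

definition rad_on :: "nat set \<Rightarrow> nat \<Rightarrow> nat" where
  "rad_on S x = (\<Prod>p\<in>S. p ^ (if p dvd x then 1 else 0))"

lemma prime_dvd_rad_on_iff:
  assumes "finite S" "\<forall>p\<in>S. prime p" "q \<in> S"
  shows "q dvd rad_on S x \<longleftrightarrow> q dvd x"
proof -
  have q: "prime q" using assms by auto
  have "q dvd p ^ (if p dvd x then 1 else 0) \<longleftrightarrow> q = p \<and> p dvd x" if "p \<in> S" for p
  proof (cases "p dvd x")
    case True
    then show ?thesis using assms(2) that q primes_dvd_imp_eq by auto
  next
    case False
    then show ?thesis using q by auto
  qed
  then show ?thesis
    unfolding rad_on_def prime_dvd_prod_iff[OF assms(1) q] using assms(3) by auto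
qed

lemma map_rad_on_pmf_of_set:
  assumes "finite S" "\<forall>p\<in>S. prime p" "m \<ge> 1"
  shows "map_pmf (rad_on S) (pmf_of_set {1..m * \<Prod>S}) = tilde_law S"
  unfolding tilde_law_def map_dvd_indicators_pmf_of_set[OF assms, symmetric]
  by (simp add: pmf.map_comp o_def rad_on_def[abs_def] cong: prod.cong)

definition coordinate_coupling :: "nat set \<Rightarrow> nat \<Rightarrow> nat \<Rightarrow> (nat \<times> nat) pmf" where
  "coordinate_coupling S M n = do {
     x \<leftarrow> pmf_of_set {1..n};
     if x \<le> M then return_pmf (x, rad_on S x) else map_pmf (Pair x) (tilde_law S)
   }"

lemma map_fst_coordinate_coupling: "map_pmf fst (coordinate_coupling S M n) = pmf_of_set {1..n}"
  unfolding coordinate_coupling_def map_bind_pmf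
  by (simp add: pmf.map_comp o_def map_pmf_const if_distrib bind_return_pmf' cong: if_cong)

lemma map_snd_coordinate_coupling:
  assumes "finite S" "\<forall>p\<in>S. prime p" "m \<ge> 1" "m * \<Prod>S \<le> n"
  shows "map_pmf snd (coordinate_coupling S (m * \<Prod>S) n) = tilde_law S"
proof (rule pmf_eqI)
  fix y
  define M where "M = m * \<Prod>S"
  define t where "t = pmf (tilde_law S) y"
  define K where "K = (\<lambda>x. if x \<le> M then return_pmf (rad_on S x) else tilde_law S)"
  have "\<Prod>S > 0" using assms prime_gt_0_nat by (auto simp: prod_pos)
  then have M: "0 < M" "M \<le> n" using assms by (auto simp: M_def)
  have "map_pmf snd (coordinate_coupling S M n) = pmf_of_set {1..n} \<bind> K"
    unfolding coordinate_coupling_def map_bind_pmf K_def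
    by (simp add: pmf.map_comp o_def if_distrib cong: if_cong)
  then have "pmf (map_pmf snd (coordinate_coupling S M n)) y = (\<Sum>x\<in>{1..n}. pmf (K x) y) / real n"
    using M by (simp add: pmf_bind integral_pmf_of_set)
  also have "(\<Sum>x\<in>{1..n}. pmf (K x) y) = (\<Sum>x\<in>{1..M}. pmf (K x) y) + (\<Sum>x\<in>{M<..n}. pmf (K x) y)"
    using M by (subst sum.union_disjoint[symmetric]) (auto intro!: sum.cong)
  also have "(\<Sum>x\<in>{M<..n}. pmf (K x) y) = real (n - M) * t"
    by (simp add: K_def t_def)
  also have "(\<Sum>x\<in>{1..M}. pmf (K x) y) = real (card ({1..M} \<inter> rad_on S -` {y}))"
    by (simp add: K_def pmf_return indicator_def sum.If_cases vimage_def Int_def)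
  also have "\<dots> = real M * t"
  proof -
    have "t = pmf (map_pmf (rad_on S) (pmf_of_set {1..M})) y"
      unfolding t_def M_def map_rad_on_pmf_of_set[OF assms(1-3)] ..
    then show ?thesis using M by (simp add: pmf_map measure_pmf_of_set field_simps)
  qed
  also have "(real M * t + real (n - M) * t) / real n = t"
    using M by (simp add: of_nat_diff field_simps)
  finally show "pmf (map_pmf snd (coordinate_coupling S (m * \<Prod>S) n)) y = pmf (tilde_law S) y"
    by (simp add: M_def t_def)
qed

lemma set_pmf_coordinate_coupling:
  assumes "(a, b) \<in> set_pmf (coordinate_coupling S M n)" "a \<le> M"
  shows "b = rad_on S a"
  using assms by (auto simp: coordinate_coupling_def split: if_splits)

definition iid_coupling :: "nat \<Rightarrow> (nat \<times> nat) pmf \<Rightarrow> ((nat \<Rightarrow> nat) \<times> (nat \<Rightarrow> nat)) pmf" where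
  "iid_coupling n \<nu> = map_pmf (\<lambda>f. (fst \<circ> f, snd \<circ> f)) (Pi_pmf {0..<n} (0, 0) (\<lambda>_. \<nu>))"

lemma map_fst_iid_coupling: "map_pmf fst (iid_coupling n \<nu>) = iid_law n (map_pmf fst \<nu>)"
  unfolding iid_coupling_def iid_law_def
  by (simp add: pmf.map_comp comp_def Pi_pmf_map[of "{0..<n}" fst "(0, 0)" 0, unfolded comp_def])

lemma map_snd_iid_coupling: "map_pmf snd (iid_coupling n \<nu>) = iid_law n (map_pmf snd \<nu>)"
  unfolding iid_coupling_def iid_law_def
  by (simp add: pmf.map_comp comp_def Pi_pmf_map[of "{0..<n}" snd "(0, 0)" 0, unfolded comp_def])

lemma set_pmf_iid_coupling:
  assumes "(x, y) \<in> set_pmf (iid_coupling n \<nu>)" "i < n"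
  shows "(x i, y i) \<in> set_pmf \<nu>"
  using assms unfolding iid_coupling_def
  by (auto simp: set_Pi_pmf PiE_dflt_def)

lemma prob_pmf_of_set_greaterThan_block:
  fixes m P n :: nat
  assumes "m \<ge> 1" "m * P \<le> n" "n < (m + 1) * P"
  shows "measure_pmf.prob (pmf_of_set {1..n}) {m * P<..} \<le> 1 / real m"
proof -
  have n: "n > 0" using assms by (cases P) auto
  have "{1..n} \<inter> {m * P<..} = {m * P<..n}" using assms(1) by (cases P) auto
  then have "measure_pmf.prob (pmf_of_set {1..n}) {m * P<..} = real (n - m * P) / real n"
    using n by (simp add: measure_pmf_of_set)
  also have "\<dots> \<le> 1 / real m"
  proof -
    have "n - m * P < P" using assms(2,3) by (simp add: algebra_simps less_diff_conv2)
    then have "m * (n - m * P) \<le> m * P" by simp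
    then have "real m * real (n - m * P) \<le> real n" using assms(2) by (metis le_trans of_nat_le_iff of_nat_mult)
    then show ?thesis using n assms(1) by (simp add: field_simps)
  qed
  finally show ?thesis .
qed

lemma square_diff_le:
  fixes a b c n :: real
  assumes "a \<le> b + c" "0 \<le> b" "a \<le> n" "b \<le> n" "0 \<le> c" "0 \<le> a"
  shows "a\<^sup>2 - b\<^sup>2 \<le> 2 * n * c"
proof (cases "a \<le> b")
  case True
  then have "a\<^sup>2 \<le> b\<^sup>2" using assms by (intro power_mono) auto
  then show ?thesis using assms by (smt (verit) mult_nonneg_nonneg)
next
  case False
  have "a\<^sup>2 - b\<^sup>2 = (a - b) * (a + b)" by (simp add: power2_eq_square algebra_simps)
  also have "\<dots> \<le> c * (2 * n)" using False assms by (intro mult_mono) auto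
  finally show ?thesis by (simp add: ac_simps)
qed

lemma sum_Ycount_square_diff_le:
  fixes x y :: "nat \<Rightarrow> nat"
  assumes "finite S" "card S \<le> K" "\<forall>i<n. i \<notin> B \<longrightarrow> (\<forall>q\<in>S. q dvd x i \<longleftrightarrow> q dvd y i)"
  shows "(\<Sum>q\<in>S. real (Ycount n x q) ^ 2) - (\<Sum>q\<in>S. real (Ycount n y q) ^ 2)
       \<le> 2 * real n * real K * real (card (B \<inter> {0..<n}))"
proof -
  define c where "c = card (B \<inter> {0..<n})"
  have each: "real (Ycount n x q) ^ 2 - real (Ycount n y q) ^ 2 \<le> 2 * real n * real c"
    if "q \<in> S" for q
  proof -
    have "{i\<in>{0..<n}. q dvd x i} \<subseteq> {i\<in>{0..<n}. q dvd y i} \<union> (B \<inter> {0..<n})"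
      using assms(3) that by auto
    then have "Ycount n x q \<le> card ({i\<in>{0..<n}. q dvd y i} \<union> (B \<inter> {0..<n}))"
      unfolding Ycount_def by (intro card_mono) auto
    also have "\<dots> \<le> Ycount n y q + c"
      unfolding Ycount_def c_def by (rule card_Un_le)
    finally have "Ycount n x q \<le> Ycount n y q + c" .
    moreover have "Ycount n x q \<le> n" "Ycount n y q \<le> n"
      unfolding Ycount_def by (auto intro!: card_mono[of "{0..<n}", simplified])
    ultimately show ?thesis by (intro square_diff_le) auto
  qed
  have "(\<Sum>q\<in>S. real (Ycount n x q) ^ 2) - (\<Sum>q\<in>S. real (Ycount n y q) ^ 2)
      = (\<Sum>q\<in>S. real (Ycount n x q) ^ 2 - real (Ycount n y q) ^ 2)"
    by (simp add: sum_subtractf)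
  also have "\<dots> \<le> (\<Sum>q\<in>S. 2 * real n * real c)"
    by (rule sum_mono) (rule each)
  also have "\<dots> \<le> real K * (2 * real n * real c)"
    using assms(2) by (simp add: mult_right_mono)
  finally show ?thesis by (simp add: c_def ac_simps)
qed

lemma card_mismatches_ge:
  fixes x y :: "nat \<Rightarrow> nat" and \<epsilon> :: real
  assumes "finite S" "card S \<le> K" "K > 0"
    and "\<forall>i<n. i \<notin> B \<longrightarrow> (\<forall>q\<in>S. q dvd x i \<longleftrightarrow> q dvd y i)"
    and "real n ^ 2 * \<epsilon> \<le> (\<Sum>q\<in>S. real (Ycount n x q) ^ 2) - (\<Sum>q\<in>S. real (Ycount n y q) ^ 2)"
  shows "real n * \<epsilon> / (2 * real K) \<le> real (card (B \<inter> {0..<n}))"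
proof (cases "n = 0")
  case False
  have "real n * (real n * \<epsilon>) \<le> real n * (2 * real K * real (card (B \<inter> {0..<n})))"
    using order_trans[OF assms(5) sum_Ycount_square_diff_le[OF assms(1,2,4)]]
    by (simp add: power2_eq_square algebra_simps)
  then show ?thesis using False assms(3) by (simp add: field_simps)
qed simp

lemma measure_Pi_pmf_hits:
  fixes D :: "'a pmf"
  assumes "finite A" "T \<subseteq> A"
  shows "measure_pmf.prob (Pi_pmf A d (\<lambda>_. D)) (Pi A (\<lambda>i. if i \<in> T then B else UNIV))
       = measure_pmf.prob D B ^ card T"
proof -
  have "measure_pmf.prob (Pi_pmf A d (\<lambda>_. D)) (Pi A (\<lambda>i. if i \<in> T then B else UNIV))
      = (\<Prod>i\<in>A. if i \<in> T then measure_pmf.prob D B else 1)"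
    using assms(1) by (simp add: measure_Pi_pmf_Pi if_distrib cong: if_cong)
  also have "\<dots> = measure_pmf.prob D B ^ card T"
    using assms by (simp add: prod.If_cases Int_absorb1 Int_def[symmetric])
  finally show ?thesis .
qed

lemma prob_Pi_pmf_many_hits_le:
  fixes D :: "'a pmf" and t r :: real
  assumes "finite A" "measure_pmf.prob D B \<le> r" "0 < r" "r \<le> 1"
  shows "measure_pmf.prob (Pi_pmf A d (\<lambda>_. D)) {f. t \<le> real (card {i\<in>A. f i \<in> B})}
       \<le> 2 ^ card A * r powr t"
proof -
  define F where "F = (\<lambda>T. Pi A (\<lambda>i. if i \<in> T then B else UNIV))"
  define I where "I = {T. T \<subseteq> A \<and> t \<le> real (card T)}"
  let ?P = "Pi_pmf A d (\<lambda>_. D)"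
  have "{f. t \<le> real (card {i\<in>A. f i \<in> B})} \<subseteq> \<Union> (F ` I)"
  proof
    fix f assume "f \<in> {f. t \<le> real (card {i\<in>A. f i \<in> B})}"
    then have "{i\<in>A. f i \<in> B} \<in> I" "f \<in> F {i\<in>A. f i \<in> B}" by (auto simp: I_def F_def)
    then show "f \<in> \<Union> (F ` I)" by blast
  qed
  then have "measure_pmf.prob ?P {f. t \<le> real (card {i\<in>A. f i \<in> B})}
      \<le> measure_pmf.prob ?P (\<Union> (F ` I))"
    by (intro measure_pmf.finite_measure_mono) auto
  also have "\<dots> \<le> (\<Sum>T\<in>I. measure_pmf.prob ?P (F T))"
    using assms(1) by (intro measure_pmf.finite_measure_subadditive_finite) (auto simp: I_def)
  also have "\<dots> \<le> (\<Sum>T\<in>I. r powr t)"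
  proof (rule sum_mono)
    fix T assume T: "T \<in> I"
    then have "measure_pmf.prob ?P (F T) = measure_pmf.prob D B ^ card T"
      unfolding F_def I_def using assms(1) by (intro measure_Pi_pmf_hits) auto
    also have "\<dots> \<le> r powr real (card T)"
      using assms(2,3) by (simp add: powr_realpow power_mono)
    also have "\<dots> \<le> r powr t" using T assms(3,4) by (intro powr_mono') (auto simp: I_def)
    finally show "measure_pmf.prob ?P (F T) \<le> r powr t" .
  qed
  also have "\<dots> \<le> 2 ^ card A * r powr t"
  proof -
    have "card I \<le> card (Pow A)" using assms(1) by (intro card_mono) (auto simp: I_def)
    then show ?thesis using assms(1) by (simp add: card_Pow mult_right_mono)
  qed
  finally show ?thesis .
qed

theorem lemma3p7:
  fixes k1 k2 n m :: nat
  assumes "k1 < k2"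
    and "m \<ge> 1"
    and "m * (\<Prod>p\<in>primes_between k1 k2. p) \<le> n"
    and "n < (m + 1) * (\<Prod>p\<in>primes_between k1 k2. p)"
  shows "\<exists>\<mu> :: ((nat \<Rightarrow> nat) \<times> (nat \<Rightarrow> nat)) pmf.
           map_pmf fst \<mu> = iid_law n (unif_law n) \<and>
           map_pmf snd \<mu> = iid_law n (tilde_law (primes_between k1 k2)) \<and>
           (\<forall>\<epsilon>::real. \<epsilon> > 0 \<longrightarrow>
              measure_pmf.prob \<mu>
                {(x, y). (\<Sum>q\<in>primes_between k1 k2. real (Ycount n x q) ^ 2)
                       - (\<Sum>q\<in>primes_between k1 k2. real (Ycount n y q) ^ 2)
                       \<ge> real n ^ 2 * \<epsilon>}
              \<le> 2 ^ n * (1 / real m) powr (real n * \<epsilon> / (2 * real k2)))"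
proof -
  define S where "S = primes_between k1 k2"
  define M where "M = m * \<Prod>S"
  define \<mu> where "\<mu> = iid_coupling n (coordinate_coupling S M n)"
  have S: "S \<subseteq> {1..k2}" "\<forall>p\<in>S. prime p" by (auto simp: S_def primes_between_def prime_ge_1_nat)
  have finS: "finite S" using finite_subset[OF S(1)] by simp
  have cardS: "card S \<le> k2" using card_mono[OF _ S(1)] by simp
  have fst\<mu>: "map_pmf fst \<mu> = iid_law n (pmf_of_set {1..n})"
    by (simp add: \<mu>_def map_fst_iid_coupling map_fst_coordinate_coupling)
  have "map_pmf snd \<mu> = iid_law n (tilde_law S)"
    using assms(2,3) map_snd_coordinate_coupling[OF finS S(2)]
    by (simp add: \<mu>_def M_def S_def map_snd_iid_coupling)
  moreover have "measure_pmf.prob \<mu>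
      {(x, y). (\<Sum>q\<in>S. real (Ycount n x q) ^ 2) - (\<Sum>q\<in>S. real (Ycount n y q) ^ 2) \<ge> real n ^ 2 * \<epsilon>}
      \<le> 2 ^ n * (1 / real m) powr (real n * \<epsilon> / (2 * real k2))" (is "measure_pmf.prob _ ?E \<le> _")
    for \<epsilon> :: real
  proof -
    let ?many = "{x. real n * \<epsilon> / (2 * real k2) \<le> real (card {i\<in>{0..<n}. x i \<in> {M<..}})}"
    have "?E \<inter> set_pmf \<mu> \<subseteq> fst -` ?many"
    proof
      fix z assume "z \<in> ?E \<inter> set_pmf \<mu>"
      then obtain x y where z: "z = (x, y)" and xy: "(x, y) \<in> ?E" "(x, y) \<in> set_pmf \<mu>"
        by (cases z) auto
      have "q dvd x i \<longleftrightarrow> q dvd y i" if "i < n" "x i \<le> M" "q \<in> S" for i q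
      proof -
        have "(x i, y i) \<in> set_pmf (coordinate_coupling S M n)"
          using set_pmf_iid_coupling xy(2) that(1) unfolding \<mu>_def .
        then have "y i = rad_on S (x i)" using that(2) by (rule set_pmf_coordinate_coupling)
        then show ?thesis using prime_dvd_rad_on_iff[OF finS S(2) that(3)] by simp
      qed
      then have "\<forall>i<n. i \<notin> {i. M < x i} \<longrightarrow> (\<forall>q\<in>S. q dvd x i \<longleftrightarrow> q dvd y i)"
        by (simp add: not_less)
      from card_mismatches_ge[OF finS cardS _ this] xy(1) assms(1)
      have "real n * \<epsilon> / (2 * real k2) \<le> real (card ({i. M < x i} \<inter> {0..<n}))" by simp
      moreover have "{i. M < x i} \<inter> {0..<n} = {i\<in>{0..<n}. x i \<in> {M<..}}" by auto
      ultimately show "z \<in> fst -` ?many" using z by simp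
    qed
    then have "measure_pmf.prob \<mu> (?E \<inter> set_pmf \<mu>) \<le> measure_pmf.prob \<mu> (fst -` ?many)"
      by (intro measure_pmf.finite_measure_mono) simp_all
    then have "measure_pmf.prob \<mu> ?E \<le> measure_pmf.prob (map_pmf fst \<mu>) ?many"
      by (simp add: measure_Int_set_pmf measure_map_pmf)
    also have "\<dots> \<le> 2 ^ n * (1 / real m) powr (real n * \<epsilon> / (2 * real k2))"
    proof -
      have "measure_pmf.prob (pmf_of_set {1..n}) {M<..} \<le> 1 / real m"
        unfolding M_def using assms(2-4) by (intro prob_pmf_of_set_greaterThan_block) (simp_all add: S_def)
      from prob_Pi_pmf_many_hits_le[OF _ this, where A = "{0..<n}" and d = 0
          and t = "real n * \<epsilon> / (2 * real k2)"]
      show ?thesis using assms(2) by (simp add: fst\<mu> iid_law_def)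
    qed
    finally show ?thesis .
  qed
  ultimately show ?thesis
    using fst\<mu> unfolding S_def unif_law_def by blast
qed

end
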